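(* For no choice of a natural number $k$ and nonnegative numbers $p_1,\dots,p_k$ with $p_1+\dots+p_k=1$ does the algorithm MinIndex$(k,p_1,\dots,p_k)$ achieve a guarantee larger than $5/9$ on forests of maximum degree three in the adversarial edge arrival model. That is, for every such parameters and every $\gamma>5/9$ there exists a forest of maximum degree at most three with an edge arrival order and a timepoint $t$ such that $\mathbb{E}[|M|]<\gamma\,\nu(G_t)$, where $M$ is the matching returned by MinIndex at time $t$.
   Context: MinIndex$(k,p_1,\dots,p_k)$: it maintains $k$ matchings $M_1,\dots,M_k$, initially empty. When an edge $e$ arrives: if $M_i\cup\{e\}$ is not a matching for every $i$, $e$ is rejected; otherwise $e$ is added to $M_i$ for the minimal index $i$ such that $M_i\cup\{e\}$ is a matching. At any time, the algorithm's output is the random matching $M$ equal to $M_i$ with probability $p_i$. The guarantee is $\gamma$ if at every timepoint $\mathbb{E}[|M|]\ge\gamma\,\nu(G_t)$, with $\nu(G_t)$ the maximum matching cardinality of the graph of arrived edges $G_t$. *)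

theory Defs
  imports Complex_Main
begin

type_synonym 'v edge = "'v set"

text \<open>Simple undirected graphs are given by a finite set of edges, each edge a 2-element vertex set.\<close>

definition is_edge :: "'v edge \<Rightarrow> bool" where
  "is_edge e \<longleftrightarrow> card e = 2"

definition is_matching :: "'v edge set \<Rightarrow> bool" where
  "is_matching M \<longleftrightarrow> (\<forall>e\<in>M. \<forall>f\<in>M. e \<noteq> f \<longrightarrow> e \<inter> f = {})"

definition max_matching_size :: "'v edge set \<Rightarrow> nat" where
  "max_matching_size E = Max (card ` {M. M \<subseteq> E \<and> is_matching M})"

definition degree :: "'v edge set \<Rightarrow> 'v \<Rightarrow> nat" where
  "degree E v = card {e\<in>E. v \<in> e}"

definition max_degree_le :: "'v edge set \<Rightarrow> nat \<Rightarrow> bool" where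
  "max_degree_le E d \<longleftrightarrow> (\<forall>v. degree E v \<le> d)"

definition is_cycle :: "'v edge set \<Rightarrow> 'v list \<Rightarrow> bool" where
  "is_cycle E vs \<longleftrightarrow> length vs \<ge> 3 \<and> distinct vs \<and>
     (\<forall>i<length vs. {vs ! i, vs ! ((i + 1) mod length vs)} \<in> E)"

definition is_forest :: "'v edge set \<Rightarrow> bool" where
  "is_forest E \<longleftrightarrow> (\<nexists>vs. is_cycle E vs)"

text \<open>State of MinIndex: matchings M_1..M_k, encoded as a function on indices 1..k.\<close>
definition minindex_step :: "nat \<Rightarrow> (nat \<Rightarrow> 'v edge set) \<Rightarrow> 'v edge \<Rightarrow> (nat \<Rightarrow> 'v edge set)" where
  "minindex_step k Ms e =
     (if \<exists>i\<in>{1..k}. is_matching (insert e (Ms i))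
      then (let i = (LEAST i. 1 \<le> i \<and> i \<le> k \<and> is_matching (insert e (Ms i)))
            in Ms(i := insert e (Ms i)))
      else Ms)"

definition minindex_run :: "nat \<Rightarrow> 'v edge list \<Rightarrow> (nat \<Rightarrow> 'v edge set)" where
  "minindex_run k es = foldl (minindex_step k) (\<lambda>_. {}) es"

text \<open>Expected size of the output matching: M = M_i with probability p_i.\<close>
definition minindex_expected :: "nat \<Rightarrow> (nat \<Rightarrow> real) \<Rightarrow> 'v edge list \<Rightarrow> real" where
  "minindex_expected k p es = (\<Sum>i=1..k. p i * real (card (minindex_run k es i)))"

end

theory Submission
  imports Defs
begin

(* If the edges arrive colour class by colour class of a Grundy (first-fit) edge colouring,
   MinIndex puts exactly colour class i into M_i: an edge of colour c is blocked in
   M_1, ..., M_(c-1) by neighbours of those colours and fits into M_c because colour classes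
   are matchings. So E|M| is at most the size of the largest colour class.
   The instance is an 18-periodic tree on the naturals in which v hangs below v - gap v.
   Truncated after m periods it has maximum degree 3, a Grundy colouring with four colours,
   each used on at most 5m+1 edges, and a matching with 9m+1 edges; hence
   E|M| <= 5m+1 < gamma (9m+1) <= gamma nu once m is large. *)

section \<open>MinIndex along a Grundy edge colouring\<close>

lemma minindex_run_snoc:
  "minindex_run k (xs @ [e]) = minindex_step k (minindex_run k xs) e"
  by (simp add: minindex_run_def)

lemma minindex_step_least_index:
  assumes "j \<in> {1..k}" and "is_matching (insert e (Ms j))"
    and "\<And>i. i \<in> {1..k} \<Longrightarrow> i < j \<Longrightarrow> \<not> is_matching (insert e (Ms i))"
  shows "minindex_step k Ms e = Ms(j := insert e (Ms j))"
proof -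
  have "(LEAST i. 1 \<le> i \<and> i \<le> k \<and> is_matching (insert e (Ms i))) = j"
    by (rule Least_equality) (use assms in \<open>auto simp: not_less[symmetric]\<close>)
  then show ?thesis
    using assms(1,2) unfolding minindex_step_def by (auto simp: Let_def)
qed

lemma minindex_step_reject:
  assumes "\<And>i. i \<in> {1..k} \<Longrightarrow> \<not> is_matching (insert e (Ms i))"
  shows "minindex_step k Ms e = Ms"
  using assms unfolding minindex_step_def by auto

definition proper_edge_colouring :: "'v edge set \<Rightarrow> ('v edge \<Rightarrow> nat) \<Rightarrow> bool" where
  "proper_edge_colouring E col \<longleftrightarrow>
     (\<forall>e\<in>E. \<forall>f\<in>E. e \<noteq> f \<longrightarrow> e \<inter> f \<noteq> {} \<longrightarrow> col e \<noteq> col f)"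

definition grundy_edge_colouring :: "'v edge set \<Rightarrow> ('v edge \<Rightarrow> nat) \<Rightarrow> bool" where
  "grundy_edge_colouring E col \<longleftrightarrow> proper_edge_colouring E col \<and>
     (\<forall>e\<in>E. 1 \<le> col e \<and> (\<forall>i. 1 \<le> i \<longrightarrow> i < col e \<longrightarrow> (\<exists>f\<in>E. e \<inter> f \<noteq> {} \<and> col f = i)))"

lemma is_matching_colour_class:
  "proper_edge_colouring E col \<Longrightarrow> is_matching {e\<in>E. col e = i}"
  unfolding proper_edge_colouring_def is_matching_def by blast

lemma grundy_edge_colouring_butlast:
  assumes "grundy_edge_colouring (set (xs @ [x])) col" and "sorted (map col (xs @ [x]))"
  shows "grundy_edge_colouring (set xs) col"
proof -
  have "col f \<le> col x" if "f \<in> set xs" for f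
    using assms(2) that by (auto simp: sorted_append)
  \<comment> \<open>so a witness of a colour below that of an edge of xs is never x\<close>
  then show ?thesis
    using assms(1) unfolding grundy_edge_colouring_def proper_edge_colouring_def
    by simp (metis less_le_trans nat_less_le)
qed

lemma minindex_run_grundy_order:
  assumes "distinct es" and "sorted (map col es)" and "grundy_edge_colouring (set es) col"
    and "i \<in> {1..k}"
  shows "minindex_run k es i = {e\<in>set es. col e = i}"
  using assms
proof (induction es arbitrary: i rule: rev_induct)
  case Nil
  then show ?case by (simp add: minindex_run_def)
next
  case (snoc x xs)
  define Ms where "Ms = minindex_run k xs"
  have IH: "Ms i = {e\<in>set xs. col e = i}" if "i \<in> {1..k}" for i
    using snoc.IH[OF _ _ grundy_edge_colouring_butlast[OF snoc.prems(3,2)] that] snoc.prems(1,2)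
    unfolding Ms_def by (simp add: sorted_append)
  have x_new: "x \<notin> set xs" using snoc.prems(1) by simp
  have grundy: "grundy_edge_colouring (set (xs @ [x])) col" by fact
  have blocked: "\<not> is_matching (insert x (Ms i))" if "i \<in> {1..k}" "i < col x" for i
  proof -
    have "\<exists>f\<in>set (xs @ [x]). x \<inter> f \<noteq> {} \<and> col f = i"
      using grundy that unfolding grundy_edge_colouring_def by auto
    then obtain f where f: "f \<in> set (xs @ [x])" "x \<inter> f \<noteq> {}" "col f = i" by blast
    then have "f \<in> Ms i" "f \<noteq> x"
      using IH[OF that(1)] that(2) by auto
    then show ?thesis
      using f(2) unfolding is_matching_def by blast
  qed
  show ?case
  proof (cases "col x \<le> k")
    case True
    have x_class: "insert x (Ms (col x)) = {e\<in>set (xs @ [x]). col e = col x}"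
      using IH[of "col x"] True grundy unfolding grundy_edge_colouring_def by auto
    have "is_matching (insert x (Ms (col x)))"
      unfolding x_class
      by (rule is_matching_colour_class) (use grundy in \<open>simp add: grundy_edge_colouring_def\<close>)
    then have "minindex_step k Ms x = Ms(col x := insert x (Ms (col x)))"
      using True grundy blocked unfolding grundy_edge_colouring_def
      by (intro minindex_step_least_index) auto
    then show ?thesis
      using IH[OF snoc.prems(4)] x_class x_new
      unfolding minindex_run_snoc Ms_def[symmetric] by auto
  next
    case False
    then have "minindex_step k Ms x = Ms"
      using blocked by (intro minindex_step_reject) auto
    then show ?thesis
      using IH[OF snoc.prems(4)] snoc.prems(4) False
      unfolding minindex_run_snoc Ms_def[symmetric] by auto
  qed
qed

lemma minindex_expected_le:
  assumes "\<forall>i\<in>{1..k}. p i \<ge> 0" and "(\<Sum>i=1..k. p i) = 1"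
    and "\<And>i. i \<in> {1..k} \<Longrightarrow> card (minindex_run k es i) \<le> B"
  shows "minindex_expected k p es \<le> B"
proof -
  have "minindex_expected k p es \<le> (\<Sum>i=1..k. p i * B)"
    unfolding minindex_expected_def
    using assms(1,3) by (intro sum_mono mult_left_mono) auto
  also have "\<dots> = B"
    using assms(2) by (simp add: sum_distrib_right[symmetric])
  finally show ?thesis .
qed

lemma card_le_max_matching_size:
  assumes "finite E" and "M \<subseteq> E" and "is_matching M"
  shows "card M \<le> max_matching_size E"
proof -
  have "finite {M. M \<subseteq> E \<and> is_matching M}"
    using assms(1) by (rule rev_finite_subset[OF finite_Collect_subsets]) auto
  then show ?thesis
    unfolding max_matching_size_def using assms(2,3) by (auto intro: Max_ge)
qed

section \<open>Forests from parent functions\<close>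

lemma cycle_two_neighbours:
  assumes "is_cycle E vs" and "v \<in> set vs"
  obtains x y where "x \<in> set vs" "y \<in> set vs" "x \<noteq> y" "x \<noteq> v" "y \<noteq> v"
    "{v, x} \<in> E" "{y, v} \<in> E"
proof -
  define n where "n = length vs"
  have n: "n \<ge> 3" and dist: "distinct vs" and adj: "\<And>i. i < n \<Longrightarrow> {vs ! i, vs ! ((i + 1) mod n)} \<in> E"
    using assms(1) unfolding is_cycle_def n_def by auto
  obtain i where i: "i < n" "vs ! i = v"
    using assms(2) unfolding n_def by (meson in_set_conv_nth)
  define a where "a = (i + 1) mod n"
  define b where "b = (i + n - 1) mod n"
  have ab: "a < n" "b < n" "a \<noteq> b" "a \<noteq> i" "b \<noteq> i" "(b + 1) mod n = i"
    using i(1) n unfolding a_def b_def by (auto simp: mod_if)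
  show ?thesis
  proof
    show "vs ! a \<in> set vs" "vs ! b \<in> set vs"
      using ab unfolding n_def by auto
    show "vs ! a \<noteq> vs ! b" "vs ! a \<noteq> v" "vs ! b \<noteq> v"
      using ab i dist unfolding n_def by (auto simp: nth_eq_iff_index_eq)
    show "{v, vs ! a} \<in> E" "{vs ! b, v} \<in> E"
      using adj[OF i(1)] adj[OF ab(2)] i(2) unfolding a_def ab(6) by auto
  qed
qed

lemma is_forest_parent_edges:
  fixes parent :: "'v::linorder \<Rightarrow> 'v"
  assumes "\<forall>e\<in>E. \<exists>v. e = {v, parent v} \<and> parent v < v"
  shows "is_forest E"
  unfolding is_forest_def
proof
  assume "\<exists>vs. is_cycle E vs"
  then obtain vs where cycle: "is_cycle E vs" by blast
  define w where "w = Max (set vs)"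
  have "w \<in> set vs"
    using cycle unfolding w_def is_cycle_def by (intro Max_in) auto
  have parent_of_w: "x = parent w" if edge: "{w, x} \<in> E" and "x \<in> set vs" for x
  proof -
    obtain v where v: "{w, x} = {v, parent v}" "parent v < v"
      using bspec[OF assms edge] by metis
    have "x \<le> w"
      unfolding w_def using \<open>x \<in> set vs\<close> by simp
    moreover have "(w = v \<and> x = parent v) \<or> (w = parent v \<and> x = v)"
      using v(1) by (simp add: doubleton_eq_iff)
    ultimately show ?thesis
      using v(2) by auto
  qed
  obtain x y where "x \<in> set vs" "y \<in> set vs" "x \<noteq> y" "x \<noteq> w" "y \<noteq> w" "{w, x} \<in> E" "{y, w} \<in> E"
    using cycle_two_neighbours[OF cycle \<open>w \<in> set vs\<close>] .
  then show False
    using parent_of_w[of x] parent_of_w[of y] by (simp add: insert_commute)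
qed

lemma degree_parent_edges_le:
  assumes "finite V"
  shows "degree ((\<lambda>v. {v, parent v}) ` V) w \<le> Suc (card {v\<in>V. parent v = w})"
proof -
  let ?edge = "\<lambda>v. {v, parent v}"
  have "{e \<in> ?edge ` V. w \<in> e} \<subseteq> insert (?edge w) (?edge ` {v\<in>V. parent v = w})"
    by auto
  then have "degree (?edge ` V) w \<le> card (insert (?edge w) (?edge ` {v\<in>V. parent v = w}))"
    unfolding degree_def using assms by (intro card_mono) auto
  also have "\<dots> \<le> Suc (card (?edge ` {v\<in>V. parent v = w}))"
    by (rule card_insert_le_m1) (use assms in auto)
  also have "\<dots> \<le> Suc (card {v\<in>V. parent v = w})"
    using card_image_le[of "{v\<in>V. parent v = w}" ?edge] assms by simp
  finally show ?thesis .
qed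

section \<open>Counting periodic predicates\<close>

lemma length_filter_mod_window:
  "length (filter (\<lambda>v. P (v mod n)) [c..<c + n]) = length (filter P [0..<n])"
proof (induction c)
  case 0
  have "filter (\<lambda>v. P (v mod n)) [0..<n] = filter P [0..<n]"
    by (rule filter_cong) auto
  then show ?case by simp
next
  case (Suc c)
  show ?case
  proof (cases "n = 0")
    case False
    have "[c..<c + n] = c # [Suc c..<c + n]" "[Suc c..<Suc c + n] = [Suc c..<c + n] @ [c + n]"
      using False by (simp_all add: upt_conv_Cons)
    then show ?thesis
      using Suc.IH by (simp split: if_splits)
  qed simp
qed

lemma length_filter_mod_periodic:
  "length (filter (\<lambda>v. P (v mod n)) [c..<c + m * n]) = m * length (filter P [0..<n])"
proof (induction m)
  case (Suc m)
  have "c + Suc m * n = (c + m * n) + n"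
    by simp
  then have "[c..<c + Suc m * n] = [c..<c + m * n] @ [c + m * n..<c + m * n + n]"
    by (metis le_add1 upt_add_eq_append)
  then show ?case
    using Suc.IH length_filter_mod_window[of P n "c + m * n"] by simp
qed simp

section \<open>An 18-periodic tree\<close>

(* The patterns are one explicit solution of the finite constraints checked below. *)

definition gap_pattern :: "nat list" where
  "gap_pattern = [9,1,2,1,1,1,3,1,2,1,1,1,1,3,1,1,1,3]"

definition colour_pattern :: "nat list" where
  "colour_pattern = [2,3,1,3,4,1,2,3,1,4,3,1,2,4,2,1,2,3]"

definition matched_pattern :: "nat set" where
  "matched_pattern = {1,3,5,7,9,12,13,16,17}"

definition tree_gap :: "nat \<Rightarrow> nat" where
  "tree_gap v = gap_pattern ! (v mod 18)"

definition tree_colour :: "nat \<Rightarrow> nat" where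
  "tree_colour v = colour_pattern ! (v mod 18)"

definition tree_matched :: "nat \<Rightarrow> bool" where
  "tree_matched v \<longleftrightarrow> v mod 18 \<in> matched_pattern"

definition tree_parent :: "nat \<Rightarrow> nat" where
  "tree_parent v = v - tree_gap v"

definition tree_edge :: "nat \<Rightarrow> nat edge" where
  "tree_edge v = {v, tree_parent v}"

(* All data are 18-periodic and adjacent tree edges have heads at distance at most 9,
   so these checks on one period cover the whole tree. *)

lemma tree_edge_conflict_check:
  "\<forall>x\<in>set [18..<36]. \<forall>y\<in>set [Suc x..<x + 10]. tree_edge x \<inter> tree_edge y \<noteq> {} \<longrightarrow>
     tree_colour x \<noteq> tree_colour y \<and> \<not> (tree_matched x \<and> tree_matched y)"
  unfolding tree_edge_def tree_parent_def tree_gap_def tree_colour_def tree_matched_def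
    gap_pattern_def colour_pattern_def matched_pattern_def
  by code_simp

(* The window bound keeps every witness inside the truncation {18..<18 * m + 21}. *)

lemma tree_grundy_check:
  "\<forall>x\<in>set [18..<39]. \<forall>i\<in>set [1..<tree_colour x].
     \<exists>y\<in>set [18..<(if x < 21 then 21 else 39)]. tree_edge x \<inter> tree_edge y \<noteq> {} \<and> tree_colour y = i"
  unfolding tree_edge_def tree_parent_def tree_gap_def tree_colour_def
    gap_pattern_def colour_pattern_def
  by code_simp

lemma tree_children_check:
  "\<forall>r\<in>set [0..<18]. length (filter (\<lambda>d. tree_gap (r + d) = d) [1..<10]) \<le> 2"
  unfolding tree_gap_def gap_pattern_def by code_simp

lemma colour_pattern_count_check:
  "\<forall>i\<in>set [1..<5]. length (filter (\<lambda>r. colour_pattern ! r = i) [0..<3]) \<le> 1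
     \<and> length (filter (\<lambda>r. colour_pattern ! r = i) [0..<18]) \<le> 5"
  unfolding colour_pattern_def by code_simp

lemma matched_pattern_count_check:
  "length (filter (\<lambda>r. r \<in> matched_pattern) [0..<3]) = 1
     \<and> length (filter (\<lambda>r. r \<in> matched_pattern) [0..<18]) = 9"
  unfolding matched_pattern_def by code_simp

lemma tree_gap_bounds: "1 \<le> tree_gap v" "tree_gap v \<le> 9"
proof -
  have "tree_gap v \<in> set gap_pattern"
    unfolding tree_gap_def by (rule nth_mem) (simp add: gap_pattern_def)
  then show "1 \<le> tree_gap v" "tree_gap v \<le> 9"
    by (auto simp: gap_pattern_def)
qed

lemma tree_colour_bounds: "1 \<le> tree_colour v" "tree_colour v \<le> 4"
proof -
  have "tree_colour v \<in> set colour_pattern"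
    unfolding tree_colour_def by (rule nth_mem) (simp add: colour_pattern_def)
  then show "1 \<le> tree_colour v" "tree_colour v \<le> 4"
    by (auto simp: colour_pattern_def)
qed

lemma tree_pattern_shift [simp]:
  "tree_gap (18 * q + v) = tree_gap v"
  "tree_colour (18 * q + v) = tree_colour v"
  "tree_matched (18 * q + v) \<longleftrightarrow> tree_matched v"
  by (simp_all add: tree_gap_def tree_colour_def tree_matched_def)

lemma tree_parent_less: "0 < v \<Longrightarrow> tree_parent v < v"
  unfolding tree_parent_def using tree_gap_bounds(1)[of v] by simp

lemma tree_parent_shift: "9 \<le> v \<Longrightarrow> tree_parent (18 * q + v) = 18 * q + tree_parent v"
  unfolding tree_parent_def using tree_gap_bounds(2)[of v] by simp

lemma tree_edge_shift: "9 \<le> v \<Longrightarrow> tree_edge (18 * q + v) = (+) (18 * q) ` tree_edge v"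
  unfolding tree_edge_def by (simp add: tree_parent_shift)

lemma Max_tree_edge: "0 < v \<Longrightarrow> Max (tree_edge v) = v"
  unfolding tree_edge_def using tree_parent_less[of v] by (simp add: max_def)

lemma card_tree_edge: "0 < v \<Longrightarrow> card (tree_edge v) = 2"
  unfolding tree_edge_def using tree_parent_less[of v] by simp

lemma inj_on_tree_edge: "inj_on tree_edge {0<..}"
  by (rule inj_onI) (metis Max_tree_edge greaterThan_iff)

lemma tree_edges_meet_near:
  assumes "tree_edge u \<inter> tree_edge u' \<noteq> {}"
  shows "u' \<le> u + 9"
proof -
  obtain z where "z \<in> tree_edge u" "z \<in> tree_edge u'"
    using assms by blast
  then have "z \<le> u" "u' \<le> z + 9"
    unfolding tree_edge_def tree_parent_def using tree_gap_bounds(2)[of u'] by auto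
  then show ?thesis by simp
qed

lemma tree_edges_meet_shift:
  assumes "9 \<le> x" and "9 \<le> y"
  shows "tree_edge (18 * q + x) \<inter> tree_edge (18 * q + y) \<noteq> {} \<longleftrightarrow> tree_edge x \<inter> tree_edge y \<noteq> {}"
  unfolding tree_edge_shift[OF assms(1)] tree_edge_shift[OF assms(2)] by auto

lemma period_representative:
  fixes v :: nat
  assumes "18 \<le> v"
  obtains q x where "v = 18 * q + x" "18 \<le> x" "x < 36"
proof
  show "v = 18 * (v div 18 - 1) + (v mod 18 + 18)"
    using assms by (simp add: algebra_simps)
qed auto

lemma tree_edge_conflict_ordered:
  assumes "18 \<le> u" and "u < u'" and "tree_edge u \<inter> tree_edge u' \<noteq> {}"
  shows "tree_colour u \<noteq> tree_colour u' \<and> \<not> (tree_matched u \<and> tree_matched u')"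
proof -
  obtain q x where u: "u = 18 * q + x" "18 \<le> x" "x < 36"
    using period_representative[OF assms(1)] .
  define y where "y = u' - 18 * q"
  have u': "u' = 18 * q + y" and y: "x < y" "y \<le> x + 9"
    using assms(2) tree_edges_meet_near[OF assms(3)] unfolding u y_def by auto
  have meet: "tree_edge x \<inter> tree_edge y \<noteq> {}"
    using assms(3) tree_edges_meet_shift[of x y q] u(2) y(1) unfolding u u' by simp
  have "x \<in> set [18..<36]" "y \<in> set [Suc x..<x + 10]"
    unfolding set_upt using u(2,3) y by simp_all
  from tree_edge_conflict_check[rule_format, OF this meet] show ?thesis
    unfolding u u' by simp
qed

lemma tree_edge_conflict:
  assumes "18 \<le> u" and "18 \<le> u'" and "u \<noteq> u'" and "tree_edge u \<inter> tree_edge u' \<noteq> {}"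
  shows "tree_colour u \<noteq> tree_colour u' \<and> \<not> (tree_matched u \<and> tree_matched u')"
proof (cases "u < u'")
  case True
  then show ?thesis using tree_edge_conflict_ordered assms by blast
next
  case False
  then have "u' < u" using assms(3) by simp
  then show ?thesis using tree_edge_conflict_ordered[of u' u] assms by (auto simp: Int_commute)
qed

lemma tree_grundy_witness:
  assumes "18 \<le> v" and "v < 18 * m + 21" and "1 \<le> i" and "i < tree_colour v"
  obtains u where "18 \<le> u" "u < 18 * m + 21" "tree_edge v \<inter> tree_edge u \<noteq> {}" "tree_colour u = i"
proof -
  obtain q x where v: "v = 18 * q + x" "18 \<le> x" "x < 39"
    and window: "18 * q + (if x < 21 then 21 else 39) \<le> 18 * m + 21"
  proof (cases "v < 21")
    case True
    then show ?thesis using that[of 0 v] assms(1) by simp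
  next
    case False
    define q where "q = (v - 21) div 18"
    have q: "18 * q \<le> v - 21" "v - 21 < 18 * q + 18"
      unfolding q_def by linarith+
    then have "q < m"
      using assms(2) False by linarith
    then show ?thesis
      using that[of q "v - 18 * q"] q False by simp
  qed
  obtain y where y: "18 \<le> y" "y < (if x < 21 then 21 else 39)"
    "tree_edge x \<inter> tree_edge y \<noteq> {}" "tree_colour y = i"
  proof -
    have "x \<in> set [18..<39]" "i \<in> set [1..<tree_colour x]"
      unfolding set_upt using v(2,3) assms(3,4) unfolding v by simp_all
    from tree_grundy_check[rule_format, OF this] obtain y
      where "y \<in> set [18..<(if x < 21 then 21 else 39)]"
        "tree_edge x \<inter> tree_edge y \<noteq> {}" "tree_colour y = i"
      by blast
    then show ?thesis
      using that unfolding set_upt atLeastLessThan_iff by blast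
  qed
  show ?thesis
  proof
    show "18 \<le> 18 * q + y" "18 * q + y < 18 * m + 21" "tree_colour (18 * q + y) = i"
      using y window by auto
    show "tree_edge v \<inter> tree_edge (18 * q + y) \<noteq> {}"
      using tree_edges_meet_shift[of x y q] v(2) y(1,3) unfolding v by simp
  qed
qed

lemma card_tree_children:
  assumes "\<forall>v\<in>V. 9 \<le> v"
  shows "card {v\<in>V. tree_parent v = w} \<le> 2"
proof -
  define D where "D = filter (\<lambda>d. tree_gap (w mod 18 + d) = d) [1..<10]"
  have gap_mod: "tree_gap (w mod 18 + d) = tree_gap (w + d)" for d
    unfolding tree_gap_def by (simp add: mod_add_left_eq)
  have "v \<in> (+) w ` set D" if "v \<in> V" "tree_parent v = w" for v
  proof
    show v: "v = w + tree_gap v"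
      using that assms tree_gap_bounds(2)[of v] unfolding tree_parent_def by force
    have "tree_gap (w mod 18 + tree_gap v) = tree_gap v"
      using gap_mod v by metis
    then show "tree_gap v \<in> set D"
      unfolding D_def set_filter set_upt using tree_gap_bounds[of v] by simp
  qed
  then have "{v\<in>V. tree_parent v = w} \<subseteq> (+) w ` set D"
    by blast
  then have "card {v\<in>V. tree_parent v = w} \<le> card ((+) w ` set D)"
    by (intro card_mono) auto
  also have "\<dots> \<le> length D"
    using card_image_le card_length le_trans by blast
  also have "\<dots> \<le> 2"
    using tree_children_check unfolding D_def by simp
  finally show ?thesis .
qed

lemma length_filter_tree_range:
  "length (filter (\<lambda>v. P (v mod 18)) [18..<18 * m + 21])
     = length (filter P [0..<3]) + m * length (filter P [0..<18])"
proof -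
  have end_eq: "18 * m + 21 = 21 + m * 18"
    by simp
  have "[18..<18 * m + 21] = [18..<21] @ [21..<21 + m * 18]"
    unfolding end_eq by (rule upt_add_eq_append) simp
  moreover have "length (filter (\<lambda>v. P (v mod 18)) [18..<21]) = length (filter P [0..<3])"
  proof -
    have "map (\<lambda>v. v mod 18) [18..<21] = [0..<3]"
      by (simp add: upt_rec)
    moreover have "length (filter P (map (\<lambda>v. v mod 18) [18..<21]))
        = length (filter (\<lambda>v. P (v mod 18)) [18..<21])"
      by (simp only: length_filter_map comp_def)
    ultimately show ?thesis
      by simp
  qed
  ultimately show ?thesis
    by (simp only: filter_append length_append length_filter_mod_periodic)
qed

lemma length_filter_tree_colour_le:
  "length (filter (\<lambda>v. tree_colour v = i) [18..<18 * m + 21]) \<le> 5 * m + 1"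
proof -
  have "length (filter (\<lambda>r. colour_pattern ! r = i) [0..<3]) \<le> 1
      \<and> length (filter (\<lambda>r. colour_pattern ! r = i) [0..<18]) \<le> 5"
  proof (cases "i \<in> set [1..<5]")
    case True
    then show ?thesis using colour_pattern_count_check by blast
  next
    case False
    have "colour_pattern ! r \<noteq> i" if "r < 18" for r
      using tree_colour_bounds[of r] False that unfolding tree_colour_def by auto
    then show ?thesis by (simp add: filter_False)
  qed
  moreover have "m * length (filter (\<lambda>r. colour_pattern ! r = i) [0..<18]) \<le> m * 5"
    using calculation by simp
  moreover have "length (filter (\<lambda>v. tree_colour v = i) [18..<18 * m + 21])
      = length (filter (\<lambda>r. colour_pattern ! r = i) [0..<3])
        + m * length (filter (\<lambda>r. colour_pattern ! r = i) [0..<18])"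
    using length_filter_tree_range[of "\<lambda>r. colour_pattern ! r = i" m]
    unfolding tree_colour_def by simp
  ultimately show ?thesis
    by linarith
qed

lemma length_filter_tree_matched:
  "length (filter tree_matched [18..<18 * m + 21]) = 9 * m + 1"
  using length_filter_tree_range[of "\<lambda>r. r \<in> matched_pattern" m] matched_pattern_count_check
  unfolding tree_matched_def by simp

definition edge_colour :: "nat edge \<Rightarrow> nat" where
  "edge_colour e = tree_colour (Max e)"

definition arrival_order :: "nat \<Rightarrow> nat edge list" where
  "arrival_order m = sort_key edge_colour (map tree_edge [18..<18 * m + 21])"

lemma set_arrival_order: "set (arrival_order m) = tree_edge ` {18..<18 * m + 21}"
  unfolding arrival_order_def by simp

lemma distinct_arrival_order: "distinct (arrival_order m)"
  unfolding arrival_order_def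
  by (simp add: distinct_map) (rule inj_on_subset[OF inj_on_tree_edge], auto)

lemma sorted_arrival_order: "sorted (map edge_colour (arrival_order m))"
  unfolding arrival_order_def by (rule sorted_sort_key)

lemma edge_colour_tree_edge: "0 < v \<Longrightarrow> edge_colour (tree_edge v) = tree_colour v"
  unfolding edge_colour_def by (simp add: Max_tree_edge)

lemma proper_colouring_arrival_order: "proper_edge_colouring (set (arrival_order m)) edge_colour"
  unfolding proper_edge_colouring_def set_arrival_order
proof (intro ballI impI)
  fix e f
  assume "e \<in> tree_edge ` {18..<18 * m + 21}" "f \<in> tree_edge ` {18..<18 * m + 21}"
    and "e \<noteq> f" "e \<inter> f \<noteq> {}"
  moreover from this(1,2) obtain u u' where "e = tree_edge u" "f = tree_edge u'" "18 \<le> u" "18 \<le> u'"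
    by auto
  ultimately show "edge_colour e \<noteq> edge_colour f"
    using tree_edge_conflict[of u u'] by (auto simp: edge_colour_tree_edge)
qed

lemma grundy_colouring_arrival_order: "grundy_edge_colouring (set (arrival_order m)) edge_colour"
  unfolding grundy_edge_colouring_def
proof (intro conjI ballI allI impI proper_colouring_arrival_order)
  fix e
  assume "e \<in> set (arrival_order m)"
  then obtain v where v: "e = tree_edge v" "18 \<le> v" "v < 18 * m + 21"
    unfolding set_arrival_order by auto
  then show "1 \<le> edge_colour e"
    using tree_colour_bounds(1)[of v] by (simp add: edge_colour_tree_edge)
  fix i
  assume "1 \<le> i" "i < edge_colour e"
  then obtain u where "18 \<le> u" "u < 18 * m + 21" "tree_edge v \<inter> tree_edge u \<noteq> {}" "tree_colour u = i"
    using tree_grundy_witness[of v m i] v by (auto simp: edge_colour_tree_edge)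
  then show "\<exists>f\<in>set (arrival_order m). e \<inter> f \<noteq> {} \<and> edge_colour f = i"
    unfolding set_arrival_order v(1) by (auto simp: edge_colour_tree_edge)
qed

lemma is_edge_arrival_order: "\<forall>e\<in>set (arrival_order m). is_edge e"
  unfolding set_arrival_order is_edge_def by (auto simp: card_tree_edge)

lemma is_forest_arrival_order: "is_forest (set (arrival_order m))"
  by (rule is_forest_parent_edges[where parent = tree_parent])
    (auto simp: set_arrival_order tree_edge_def tree_parent_less)

lemma max_degree_arrival_order: "max_degree_le (set (arrival_order m)) 3"
proof -
  have edges: "set (arrival_order m) = (\<lambda>v. {v, tree_parent v}) ` {18..<18 * m + 21}"
    unfolding set_arrival_order tree_edge_def ..
  show ?thesis
    unfolding max_degree_le_def edges
  proof
    fix w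
    have "degree ((\<lambda>v. {v, tree_parent v}) ` {18..<18 * m + 21}) w
        \<le> Suc (card {v\<in>{18..<18 * m + 21}. tree_parent v = w})"
      by (rule degree_parent_edges_le) simp
    also have "\<dots> \<le> 3"
      using card_tree_children[of "{18..<18 * m + 21}" w] by simp
    finally show "degree ((\<lambda>v. {v, tree_parent v}) ` {18..<18 * m + 21}) w \<le> 3" .
  qed
qed

lemma card_colour_class_arrival_order:
  "card {e\<in>set (arrival_order m). edge_colour e = i} \<le> 5 * m + 1"
proof -
  have "{e\<in>set (arrival_order m). edge_colour e = i}
      = tree_edge ` {v\<in>{18..<18 * m + 21}. tree_colour v = i}"
    unfolding set_arrival_order by (auto simp: edge_colour_tree_edge)
  then have "card {e\<in>set (arrival_order m). edge_colour e = i}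
      \<le> card {v\<in>{18..<18 * m + 21}. tree_colour v = i}"
    by (simp add: card_image_le)
  also have "\<dots> = length (filter (\<lambda>v. tree_colour v = i) [18..<18 * m + 21])"
    by (simp add: distinct_length_filter Int_def conj_commute)
  also have "\<dots> \<le> 5 * m + 1"
    by (rule length_filter_tree_colour_le)
  finally show ?thesis .
qed

lemma max_matching_size_arrival_order:
  "9 * m + 1 \<le> max_matching_size (set (arrival_order m))"
proof -
  define M where "M = tree_edge ` {v\<in>{18..<18 * m + 21}. tree_matched v}"
  have "is_matching M"
    unfolding M_def is_matching_def
  proof (intro ballI impI)
    fix e f
    assume "e \<in> tree_edge ` {v\<in>{18..<18 * m + 21}. tree_matched v}"
      "f \<in> tree_edge ` {v\<in>{18..<18 * m + 21}. tree_matched v}" and "e \<noteq> f"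
    moreover from this(1,2) obtain u u' where "e = tree_edge u" "f = tree_edge u'"
      "18 \<le> u" "18 \<le> u'" "tree_matched u" "tree_matched u'"
      by auto
    ultimately show "e \<inter> f = {}"
      using tree_edge_conflict[of u u'] by auto
  qed
  moreover have "M \<subseteq> set (arrival_order m)"
    unfolding M_def set_arrival_order by auto
  ultimately have "card M \<le> max_matching_size (set (arrival_order m))"
    by (intro card_le_max_matching_size) auto
  moreover have "card M = length (filter tree_matched [18..<18 * m + 21])"
    unfolding M_def
    by (subst card_image, rule inj_on_subset[OF inj_on_tree_edge], auto)
      (simp add: distinct_length_filter Int_def conj_ac)
  ultimately show ?thesis
    using length_filter_tree_matched by simp
qed

theorem mainTheorem4:
  fixes k :: nat and p :: "nat \<Rightarrow> real" and \<gamma> :: real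
  assumes "\<forall>i\<in>{1..k}. p i \<ge> 0"
    and "(\<Sum>i=1..k. p i) = 1"
    and "\<gamma> > 5/9"
  shows "\<exists>(es :: nat edge list) t.
           distinct es \<and> (\<forall>e\<in>set es. is_edge e) \<and>
           is_forest (set es) \<and> max_degree_le (set es) 3 \<and>
           t \<le> length es \<and>
           minindex_expected k p (take t es) < \<gamma> * real (max_matching_size (set (take t es)))"
proof -
  obtain m :: nat where "(1 - \<gamma>) / (9 * \<gamma> - 5) < real m"
    using reals_Archimedean2 by blast
  then have ratio: "5 * real m + 1 < \<gamma> * (9 * real m + 1)"
    using assms(3) by (simp add: divide_less_eq algebra_simps)
  define es where "es = arrival_order m"
  have "minindex_expected k p es \<le> 5 * m + 1"
  proof (rule minindex_expected_le[OF assms(1,2)])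
    fix i
    assume "i \<in> {1..k}"
    then have "minindex_run k es i = {e\<in>set es. edge_colour e = i}"
      unfolding es_def
      by (rule minindex_run_grundy_order[OF distinct_arrival_order sorted_arrival_order
            grundy_colouring_arrival_order])
    then show "card (minindex_run k es i) \<le> 5 * m + 1"
      unfolding es_def using card_colour_class_arrival_order by simp
  qed
  also have "\<dots> < \<gamma> * (9 * m + 1)"
    using ratio by (simp add: algebra_simps)
  also have "\<dots> \<le> \<gamma> * max_matching_size (set es)"
    using max_matching_size_arrival_order[of m] assms(3) unfolding es_def
    by (intro mult_left_mono) linarith+
  finally show ?thesis
    using distinct_arrival_order is_edge_arrival_order is_forest_arrival_order
      max_degree_arrival_order unfolding es_def
    by (intro exI[of _ "arrival_order m"] exI[of _ "length (arrival_order m)"]) simp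
qed

end
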